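(* Let $n\ge2$, $A\in\mathbb{R}^{n\times d}$ with every row satisfying $\|A_{(i,:)}\|_2\le1$, $\mathcal{B}_d=\{\mathbf{w}\in\mathbb{R}^d:\|\mathbf{w}\|_2\le1\}$, $\alpha_t=1$, $g(\mathbf{w},\mathbf{p})=\mathbf{p}^{\top}A\mathbf{w}$, $h_t(\mathbf{w})=-g(\mathbf{w},\mathbf{p}_t)$, $\ell_t(\mathbf{p})=g(\mathbf{w}_t,\mathbf{p})$. Let $\widehat{\mathbf{w}}_0=\mathbf{0}$, $\widehat{\mathbf{p}}_0=\tfrac{\mathbf{1}}{n}$ and for $t=1,\dots,T$: $\mathbf{w}_t=\arg\min_{\mathbf{w}\in\mathcal{B}_d}\frac{1}{\sqrt{\log n}}\langle-A^{\top}\widehat{\mathbf{p}}_{t-1},\mathbf{w}\rangle+\frac12\|\mathbf{w}-\widehat{\mathbf{w}}_{t-1}\|_2^2$, $\mathbf{p}_t=\arg\min_{\mathbf{p}\in\Delta^n}\sqrt{\log n}\langle A\widehat{\mathbf{w}}_{t-1},\mathbf{p}\rangle+D_E(\mathbf{p},\widehat{\mathbf{p}}_{t-1})$, $\widehat{\mathbf{w}}_t=\arg\min_{\mathbf{w}\in\mathcal{B}_d}\frac{1}{\sqrt{\log n}}\langle-A^{\top}\mathbf{p}_t,\mathbf{w}\rangle+\frac12\|\mathbf{w}-\widehat{\mathbf{w}}_{t-1}\|_2^2$, $\widehat{\mathbf{p}}_t=\arg\min_{\mathbf{p}\in\Delta^n}\sqrt{\log n}\langle A\mathbf{w}_t,\mathbf{p}\rangle+D_E(\mathbf{p},\widehat{\mathbf{p}}_{t-1})$.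 Define $R^{\mathbf{w}}=\sum_{t=1}^Th_t(\mathbf{w}_t)-\min_{\mathbf{w}\in\mathcal{B}_d}\sum_{t=1}^Th_t(\mathbf{w})$ and $R^{\mathbf{p}}=\sum_{t=1}^T\ell_t(\mathbf{p}_t)-\min_{\mathbf{p}\in\Delta^n}\sum_{t=1}^T\ell_t(\mathbf{p})$. Then $R^{\mathbf{p}}+R^{\mathbf{w}}=O(\sqrt{\log n})$, i.e. there is a universal constant $C$ such that $R^{\mathbf{p}}+R^{\mathbf{w}}\le C\sqrt{\log n}$ for all $T$.
   Context: $\Delta^n$ is the probability simplex; $\mathbf{1}$ the all-ones vector; $D_E(\mathbf{p},\mathbf{q})=\sum_ip_i\log(p_i/q_i)$ (KL divergence). *)

theory Defs
  imports Complex_Main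
begin

text \<open>Vectors in R^k are represented as functions nat => real that vanish
  outside the index set {..<k}; an n x d matrix is nat => nat => real, only
  the entries with i < n, j < d being relevant.\<close>

definition dotv :: "nat \<Rightarrow> (nat \<Rightarrow> real) \<Rightarrow> (nat \<Rightarrow> real) \<Rightarrow> real" where
  "dotv k x y = (\<Sum>i<k. x i * y i)"

definition normv :: "nat \<Rightarrow> (nat \<Rightarrow> real) \<Rightarrow> real" where
  "normv k x = sqrt (\<Sum>i<k. (x i)\<^sup>2)"

definition matvec :: "nat \<Rightarrow> nat \<Rightarrow> (nat \<Rightarrow> nat \<Rightarrow> real) \<Rightarrow> (nat \<Rightarrow> real) \<Rightarrow> (nat \<Rightarrow> real)" where
  "matvec n d A w = (\<lambda>i. if i < n then (\<Sum>j<d. A i j * w j) else 0)"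

definition matTvec :: "nat \<Rightarrow> nat \<Rightarrow> (nat \<Rightarrow> nat \<Rightarrow> real) \<Rightarrow> (nat \<Rightarrow> real) \<Rightarrow> (nat \<Rightarrow> real)" where
  "matTvec n d A p = (\<lambda>j. if j < d then (\<Sum>i<n. A i j * p i) else 0)"

definition unit_ball :: "nat \<Rightarrow> (nat \<Rightarrow> real) set" where
  "unit_ball d = {w. (\<forall>j\<ge>d. w j = 0) \<and> normv d w \<le> 1}"

definition simplex :: "nat \<Rightarrow> (nat \<Rightarrow> real) set" where
  "simplex n = {p. (\<forall>i\<ge>n. p i = 0) \<and> (\<forall>i<n. 0 \<le> p i) \<and> (\<Sum>i<n. p i) = 1}"

definition KL :: "nat \<Rightarrow> (nat \<Rightarrow> real) \<Rightarrow> (nat \<Rightarrow> real) \<Rightarrow> real" where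
  "KL n p q = (\<Sum>i<n. p i * ln (p i / q i))"

definition game :: "nat \<Rightarrow> nat \<Rightarrow> (nat \<Rightarrow> nat \<Rightarrow> real) \<Rightarrow> (nat \<Rightarrow> real) \<Rightarrow> (nat \<Rightarrow> real) \<Rightarrow> real" where
  "game n d A w p = dotv n p (matvec n d A w)"

end

theory Submission
  imports Defs "HOL-Analysis.Convex"
begin

(* For each player the three-point
   property of its two prox steps in round t bounds the regret of that round by a telescoping
   potential difference plus an error term: a cross term |p^T A w| <= |p|_1 |w|_2 (rows of A
   have norm at most 1) minus the stability terms of its own steps.  By AM-GM with weight eta
   each cross term is absorbed by one stability term of each player, so the errors cancel and
   the total regret is at most the initial potentials eta/2 + ln n / eta, which equals
   (3/2) sqrt (ln n) for eta = sqrt (ln n).  Stability on the simplex is Pinsker's inequality,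
   obtained from the pointwise bound a ln (a/b) - a + b >= 3 (a - b)^2 / (2 (a + 2 b)) and
   Cauchy-Schwarz with weights a_i + 2 b_i. *)

definition normv1 :: "nat \<Rightarrow> (nat \<Rightarrow> real) \<Rightarrow> real" where
  "normv1 k x = (\<Sum>i<k. \<bar>x i\<bar>)"

lemma normv1_diff_commute: "normv1 n (\<lambda>i. x i - y i) = normv1 n (\<lambda>i. y i - x i)"
  by (simp add: normv1_def abs_minus_commute)

lemma ln_ge_rational:
  fixes x :: real
  assumes "0 < x"
  shows "(5 * x\<^sup>2 - 4 * x - 1) / (2 * x\<^sup>2 + 4 * x) \<le> ln x"
proof -
  define g where "g x = ln x - (5 * x\<^sup>2 - 4 * x - 1) / (2 * x\<^sup>2 + 4 * x)" for x :: real
  have g': "(g has_real_derivative (y - 1) ^ 3 / (y\<^sup>2 * (y + 2)\<^sup>2)) (at y)" if "0 < y" for y :: real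
  proof -
    have nz: "2 * y\<^sup>2 + 4 * y \<noteq> 0"
      using that by (smt (verit) zero_less_power)
    have "(g has_real_derivative 1 / y - ((10 * y - 4) * (2 * y\<^sup>2 + 4 * y)
        - (5 * y\<^sup>2 - 4 * y - 1) * (4 * y + 4)) / (2 * y\<^sup>2 + 4 * y)\<^sup>2) (at y)"
      unfolding g_def using that nz
      by (auto intro!: derivative_eq_intros simp: power2_eq_square field_simps)
    moreover have "1 / y - ((10 * y - 4) * (2 * y\<^sup>2 + 4 * y)
        - (5 * y\<^sup>2 - 4 * y - 1) * (4 * y + 4)) / (2 * y\<^sup>2 + 4 * y)\<^sup>2
        = (y - 1) ^ 3 / (y\<^sup>2 * (y + 2)\<^sup>2)"
      using that nz
      by (simp add: divide_simps) (simp add: algebra_simps power2_eq_square power3_eq_cube)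
    ultimately show ?thesis
      by simp
  qed
  have "g 1 \<le> g x"
  proof (cases "1 \<le> x")
    case True
    show ?thesis
      by (rule DERIV_nonneg_imp_nondecreasing[OF True]) (use g' in \<open>force\<close>)
  next
    case False
    have "(y - 1) ^ 3 / (y\<^sup>2 * (y + 2)\<^sup>2) \<le> 0" if "y \<le> 1" for y :: real
      using that by (intro divide_nonpos_nonneg) (auto simp: power_le_zero_eq)
    then show ?thesis
      using False assms g'
      by (intro DERIV_nonpos_imp_nonincreasing[of x 1 g]) (auto, metis order.strict_trans2)
  qed
  then show ?thesis
    by (simp add: g_def)
qed

lemma xlnx_bregman_ge:
  fixes a b :: real
  assumes "0 \<le> a" and "0 < b"
  shows "3 * (a - b)\<^sup>2 / (2 * (a + 2 * b)) \<le> a * ln (a / b) - a + b"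
proof (cases "a = 0")
  case True
  then show ?thesis
    using assms by (simp add: power2_eq_square field_simps)
next
  case False
  then have "0 < a"
    using assms by simp
  have "0 < 2 * (a / b)\<^sup>2 + 4 * (a / b)" and "0 < a + 2 * b"
    using \<open>0 < a\<close> assms by (simp_all add: add_pos_pos)
  then have "3 * (a - b)\<^sup>2 / (2 * (a + 2 * b))
      = a * ((5 * (a / b)\<^sup>2 - 4 * (a / b) - 1) / (2 * (a / b)\<^sup>2 + 4 * (a / b))) - a + b"
    using \<open>0 < a\<close> assms
    by (simp add: divide_simps) (simp add: algebra_simps power2_eq_square)
  also have "\<dots> \<le> a * ln (a / b) - a + b"
    using \<open>0 < a\<close> assms
    by (intro add_right_mono diff_right_mono mult_left_mono ln_ge_rational) auto
  finally show ?thesis .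
qed

lemma pinsker:
  assumes "a \<in> simplex n" and "b \<in> simplex n" and "\<forall>i<n. 0 < b i"
  shows "(normv1 n (\<lambda>i. a i - b i))\<^sup>2 \<le> 2 * KL n a b"
proof -
  have a: "\<forall>i<n. 0 \<le> a i" "(\<Sum>i<n. a i) = 1" and b: "\<forall>i<n. 0 < b i" "(\<Sum>i<n. b i) = 1"
    using assms by (auto simp: simplex_def)
  define m where "m i = a i + 2 * b i" for i
  have m_pos: "0 < m i" if "i < n" for i
    using a b that by (simp add: m_def add_nonneg_pos)
  have sum_m: "(\<Sum>i<n. m i) = 3"
    using a b by (simp add: m_def sum.distrib sum_distrib_left[symmetric])
  have "(normv1 n (\<lambda>i. a i - b i))\<^sup>2
      = (\<Sum>i<n. (\<bar>a i - b i\<bar> / sqrt (m i)) * sqrt (m i))\<^sup>2"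
    unfolding normv1_def using m_pos
    by (intro arg_cong[where f = power2] sum.cong) (auto simp: less_imp_neq[symmetric])
  also have "\<dots> \<le> (\<Sum>i<n. (\<bar>a i - b i\<bar> / sqrt (m i))\<^sup>2) * (\<Sum>i<n. (sqrt (m i))\<^sup>2)"
    by (rule Cauchy_Schwarz_ineq_sum)
  also have "\<dots> = 2 * (\<Sum>i<n. 3 * (a i - b i)\<^sup>2 / (2 * m i))"
    using m_pos sum_m
    by (simp add: power_divide less_imp_le sum_distrib_left sum_distrib_right mult.commute)
  also have "\<dots> \<le> 2 * (\<Sum>i<n. a i * ln (a i / b i) - a i + b i)"
    using a b unfolding m_def by (intro mult_left_mono sum_mono xlnx_bregman_ge) auto
  also have "\<dots> = 2 * KL n a b"
    using a b by (simp add: KL_def sum.distrib sum_subtractf)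
  finally show ?thesis .
qed

lemma KL_nonneg:
  assumes "a \<in> simplex n" and "b \<in> simplex n" and "\<forall>i<n. 0 < b i"
  shows "0 \<le> KL n a b"
  using pinsker[OF assms] by (smt (verit) zero_le_power2)

lemma KL_self: "KL n x x = 0"
  unfolding KL_def by (intro sum.neutral) auto

lemma KL_nonpos_imp_eq:
  assumes "a \<in> simplex n" and "b \<in> simplex n" and "\<forall>i<n. 0 < b i"
    and "KL n a b \<le> 0"
  shows "a = b"
proof -
  have "(normv1 n (\<lambda>i. a i - b i))\<^sup>2 \<le> 2 * KL n a b"
    using assms by (intro pinsker)
  then have "normv1 n (\<lambda>i. a i - b i) = 0"
    using assms(4) power2_less_eq_zero_iff by (smt (verit))
  then have "a i = b i" if "i < n" for i
    using that by (simp add: normv1_def sum_nonneg_eq_0_iff)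
  moreover have "a i = b i" if "n \<le> i" for i
    using assms(1,2) that by (simp add: simplex_def)
  ultimately show ?thesis
    by (meson ext not_le)
qed

lemma KL_uniform_le_ln:
  assumes "u \<in> simplex n"
  shows "KL n u (\<lambda>i. if i < n then 1 / real n else 0) \<le> ln (real n)"
proof -
  have "u i * ln (u i / (1 / real n)) \<le> u i * ln (real n)" if "i < n" for i
  proof -
    have "u i \<le> (\<Sum>k<n. u k)"
      using assms that by (intro member_le_sum) (auto simp: simplex_def)
    then have "0 \<le> u i" and "u i \<le> 1"
      using assms that by (auto simp: simplex_def)
    show ?thesis
    proof (cases "u i = 0")
      case False
      then have "ln (u i / (1 / real n)) = ln (u i) + ln (real n)"
        using \<open>0 \<le> u i\<close> that by (simp add: ln_mult)
      moreover have "ln (u i) \<le> 0"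
        using False \<open>0 \<le> u i\<close> \<open>u i \<le> 1\<close> by simp
      ultimately show ?thesis
        using \<open>0 \<le> u i\<close> by (simp add: mult_left_mono)
    qed simp
  qed
  then have "KL n u (\<lambda>i. if i < n then 1 / real n else 0) \<le> (\<Sum>i<n. u i * ln (real n))"
    unfolding KL_def by (intro sum_mono) auto
  also have "\<dots> = ln (real n)"
    using assms by (simp add: simplex_def sum_distrib_right[symmetric])
  finally show ?thesis .
qed

definition exp_weights :: "nat \<Rightarrow> real \<Rightarrow> (nat \<Rightarrow> real) \<Rightarrow> (nat \<Rightarrow> real) \<Rightarrow> nat \<Rightarrow> real" where
  "exp_weights n \<eta> c y = (\<lambda>i. if i < n
     then y i * exp (- \<eta> * c i) / (\<Sum>k<n. y k * exp (- \<eta> * c k)) else 0)"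

lemma exp_weights_normalizer_pos:
  assumes "y \<in> simplex n" and "\<forall>i<n. 0 < y i"
  shows "0 < (\<Sum>k<n. y k * exp (- \<eta> * c k))"
proof -
  have "n \<noteq> 0"
    using assms by (intro notI) (simp add: simplex_def)
  then show ?thesis
    using assms by (intro sum_pos) auto
qed

lemma exp_weights_simplex:
  assumes "y \<in> simplex n" and "\<forall>i<n. 0 < y i"
  shows "exp_weights n \<eta> c y \<in> simplex n" and "\<forall>i<n. 0 < exp_weights n \<eta> c y i"
  using exp_weights_normalizer_pos[OF assms, of \<eta> c] assms
  by (auto simp: exp_weights_def simplex_def sum_divide_distrib[symmetric] less_imp_le)

lemma entropic_objective_eq_KL_exp_weights:
  assumes y: "y \<in> simplex n" "\<forall>i<n. 0 < y i" and q: "q \<in> simplex n"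
  shows "\<eta> * dotv n c q + KL n q y
    = KL n q (exp_weights n \<eta> c y) - ln (\<Sum>k<n. y k * exp (- \<eta> * c k))"
proof -
  define Z where "Z = (\<Sum>k<n. y k * exp (- \<eta> * c k))"
  have "0 < Z"
    unfolding Z_def by (rule exp_weights_normalizer_pos[OF y])
  have weight_term: "q i * ln (q i / exp_weights n \<eta> c y i)
      = q i * ln (q i / y i) + \<eta> * (c i * q i) + q i * ln Z" if "i < n" for i
  proof (cases "q i = 0")
    case False
    then have "0 < q i"
      using q that by (auto simp: simplex_def order.order_iff_strict)
    moreover have "0 < y i"
      using that y by simp
    ultimately have "ln (q i / exp_weights n \<eta> c y i) = ln (q i / y i) + \<eta> * c i + ln Z"
      using that \<open>0 < Z\<close> by (simp add: exp_weights_def Z_def ln_div ln_mult)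
    then show ?thesis
      by (simp add: algebra_simps)
  qed simp
  have "KL n q (exp_weights n \<eta> c y)
      = KL n q y + \<eta> * dotv n c q + (\<Sum>i<n. q i) * ln Z"
    by (simp add: KL_def dotv_def weight_term sum.distrib sum_distrib_left sum_distrib_right)
  then show ?thesis
    using q by (simp add: simplex_def Z_def)
qed

lemma entropic_step_eq_exp_weights:
  assumes y: "y \<in> simplex n" "\<forall>i<n. 0 < y i"
    and x: "is_arg_min (\<lambda>q. \<eta> * dotv n c q + KL n q y) (\<lambda>q. q \<in> simplex n) x"
  shows "x = exp_weights n \<eta> c y"
proof (rule KL_nonpos_imp_eq)
  show "x \<in> simplex n"
    using x by (simp add: is_arg_min_def)
  show "exp_weights n \<eta> c y \<in> simplex n" "\<forall>i<n. 0 < exp_weights n \<eta> c y i"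
    using exp_weights_simplex[OF y] by auto
  then have "\<eta> * dotv n c x + KL n x y
      \<le> \<eta> * dotv n c (exp_weights n \<eta> c y) + KL n (exp_weights n \<eta> c y) y"
    using x by (simp add: is_arg_min_def not_less)
  then show "KL n x (exp_weights n \<eta> c y) \<le> 0"
    using \<open>x \<in> simplex n\<close> \<open>exp_weights n \<eta> c y \<in> simplex n\<close>
    by (simp add: entropic_objective_eq_KL_exp_weights[OF y] KL_self)
qed

lemma entropic_step_three_point:
  assumes y: "y \<in> simplex n" "\<forall>i<n. 0 < y i"
    and x: "is_arg_min (\<lambda>q. \<eta> * dotv n c q + KL n q y) (\<lambda>q. q \<in> simplex n) x"
    and z: "z \<in> simplex n"
  shows "\<eta> * dotv n c x + KL n x y + KL n z x = \<eta> * dotv n c z + KL n z y"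
  using entropic_step_eq_exp_weights[OF y x] exp_weights_simplex[OF y] z
  by (simp add: entropic_objective_eq_KL_exp_weights[OF y] KL_self)

lemma normv_sq: "(normv d x)\<^sup>2 = (\<Sum>j<d. (x j)\<^sup>2)"
  unfolding normv_def by (simp add: sum_nonneg)

lemma normv_diff_commute: "normv d (\<lambda>j. x j - y j) = normv d (\<lambda>j. y j - x j)"
  by (simp add: normv_def power2_commute)

lemma abs_dotv_le: "\<bar>dotv d x y\<bar> \<le> normv d x * normv d y"
proof -
  have "\<bar>dotv d x y\<bar> = sqrt ((dotv d x y)\<^sup>2)"
    by simp
  also have "\<dots> \<le> sqrt ((\<Sum>j<d. (x j)\<^sup>2) * (\<Sum>j<d. (y j)\<^sup>2))"
    unfolding dotv_def by (intro real_sqrt_le_mono Cauchy_Schwarz_ineq_sum)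
  finally show ?thesis
    by (simp add: normv_def real_sqrt_mult)
qed

lemma unit_ball_segment:
  assumes x: "x \<in> unit_ball d" and z: "z \<in> unit_ball d" and s: "0 \<le> s" "s \<le> 1"
  shows "(\<lambda>j. x j + s * (z j - x j)) \<in> unit_ball d"
proof -
  have "(x j + s * (z j - x j))\<^sup>2 \<le> (1 - s) * (x j)\<^sup>2 + s * (z j)\<^sup>2" for j
  proof -
    have "(1 - s) * (x j)\<^sup>2 + s * (z j)\<^sup>2 - (x j + s * (z j - x j))\<^sup>2 = s * (1 - s) * (z j - x j)\<^sup>2"
      by (simp add: power2_eq_square algebra_simps)
    then show ?thesis
      using s by (smt (verit) mult_nonneg_nonneg zero_le_power2)
  qed
  then have "(\<Sum>j<d. (x j + s * (z j - x j))\<^sup>2) \<le> (\<Sum>j<d. (1 - s) * (x j)\<^sup>2 + s * (z j)\<^sup>2)"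
    by (intro sum_mono)
  also have "\<dots> = (1 - s) * (\<Sum>j<d. (x j)\<^sup>2) + s * (\<Sum>j<d. (z j)\<^sup>2)"
    by (simp add: sum.distrib sum_distrib_left)
  also have "\<dots> \<le> (1 - s) * 1 + s * 1"
    using x z s unfolding unit_ball_def normv_def by (intro add_mono mult_left_mono) auto
  finally show ?thesis
    using x z unfolding unit_ball_def normv_def by simp
qed

lemma normv_sq_segment:
  "(normv d (\<lambda>j. x j + s * (z j - x j) - y j))\<^sup>2
    = (normv d (\<lambda>j. x j - y j))\<^sup>2 + 2 * s * dotv d (\<lambda>j. x j - y j) (\<lambda>j. z j - x j)
      + s\<^sup>2 * (normv d (\<lambda>j. z j - x j))\<^sup>2"
  unfolding normv_sq dotv_def sum_distrib_left sum.distrib[symmetric]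
  by (intro sum.cong) (simp_all add: power2_eq_square algebra_simps)

lemma dotv_segment:
  "dotv d g (\<lambda>j. x j + s * (z j - x j)) = dotv d g x + s * dotv d g (\<lambda>j. z j - x j)"
  unfolding dotv_def sum_distrib_left sum.distrib[symmetric]
  by (intro sum.cong) (simp_all add: algebra_simps)

lemma ball_step_variational:
  assumes x: "is_arg_min (\<lambda>v. \<eta> * dotv d g v + 1/2 * (normv d (\<lambda>j. v j - y j))\<^sup>2)
      (\<lambda>v. v \<in> unit_ball d) x"
    and z: "z \<in> unit_ball d"
  shows "0 \<le> \<eta> * dotv d g (\<lambda>j. z j - x j) + dotv d (\<lambda>j. x j - y j) (\<lambda>j. z j - x j)"
    (is "0 \<le> ?a")
proof -
  define b where "b = 1/2 * (normv d (\<lambda>j. z j - x j))\<^sup>2"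
  have segment_nonneg: "0 \<le> ?a + s * b" if s: "0 < s" "s \<le> 1" for s
  proof -
    define v where "v j = x j + s * (z j - x j)" for j
    have "v \<in> unit_ball d"
      unfolding v_def using x z s by (intro unit_ball_segment) (auto simp: is_arg_min_def)
    then have "\<eta> * dotv d g x + 1/2 * (normv d (\<lambda>j. x j - y j))\<^sup>2
        \<le> \<eta> * dotv d g v + 1/2 * (normv d (\<lambda>j. v j - y j))\<^sup>2"
      using x by (simp add: is_arg_min_def not_less)
    then have "0 \<le> s * (?a + s * b)"
      unfolding v_def normv_sq_segment dotv_segment b_def
      by (simp add: power2_eq_square algebra_simps)
    then show ?thesis
      using s by (simp add: zero_le_mult_iff)
  qed
  moreover have "((\<lambda>s. ?a + s * b) \<longlongrightarrow> ?a) (at_right 0)"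
    by (auto intro!: tendsto_eq_intros)
  moreover have "\<forall>\<^sub>F s in at_right 0. 0 \<le> ?a + s * b"
    using eventually_at_right_real[OF zero_less_one]
    by eventually_elim (simp add: segment_nonneg)
  ultimately show ?thesis
    by (intro tendsto_lowerbound) auto
qed

lemma ball_step_three_point:
  assumes x: "is_arg_min (\<lambda>v. \<eta> * dotv d g v + 1/2 * (normv d (\<lambda>j. v j - y j))\<^sup>2)
      (\<lambda>v. v \<in> unit_ball d) x"
    and z: "z \<in> unit_ball d"
  shows "\<eta> * dotv d g x + 1/2 * (normv d (\<lambda>j. x j - y j))\<^sup>2 + 1/2 * (normv d (\<lambda>j. z j - x j))\<^sup>2
    \<le> \<eta> * dotv d g z + 1/2 * (normv d (\<lambda>j. z j - y j))\<^sup>2"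
  using ball_step_variational[OF x z] normv_sq_segment[of d x 1 z y] dotv_segment[of d g x 1 z]
  by (simp add: algebra_simps)

lemma game_eq_sum: "game n d A v q = (\<Sum>i<n. q i * (\<Sum>j<d. A i j * v j))"
  by (simp add: game_def dotv_def matvec_def)

lemma dotv_matvec_eq_game: "dotv n (matvec n d A v) q = game n d A v q"
  by (simp add: game_def dotv_def mult.commute)

lemma dotv_uminus_matTvec_eq_game: "dotv d (\<lambda>j. - matTvec n d A q j) v = - game n d A v q"
  unfolding game_eq_sum dotv_def matTvec_def
  by (simp add: sum_negf sum_distrib_left sum_distrib_right mult_ac sum.swap[of _ "{..<d}"])

lemma game_diff_diff:
  "game n d A v q - game n d A v' q - game n d A v q' + game n d A v' q'
    = game n d A (\<lambda>j. v j - v' j) (\<lambda>i. q i - q' i)"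
  unfolding game_eq_sum
  by (simp add: left_diff_distrib right_diff_distrib sum_subtractf sum.distrib)

lemma abs_game_le:
  assumes "\<forall>i<n. normv d (A i) \<le> 1"
  shows "\<bar>game n d A v q\<bar> \<le> normv1 n q * normv d v"
proof -
  have "\<bar>game n d A v q\<bar> \<le> (\<Sum>i<n. \<bar>q i\<bar> * \<bar>dotv d (A i) v\<bar>)"
    unfolding game_eq_sum dotv_def by (rule order.trans[OF sum_abs]) (simp add: abs_mult)
  also have "\<dots> \<le> (\<Sum>i<n. \<bar>q i\<bar> * normv d v)"
  proof (intro sum_mono mult_left_mono)
    fix i assume "i \<in> {..<n}"
    then have "normv d (A i) * normv d v \<le> 1 * normv d v"
      using assms by (intro mult_right_mono) (auto simp: normv_def sum_nonneg)
    then show "\<bar>dotv d (A i) v\<bar> \<le> normv d v"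
      using abs_dotv_le[of d "A i" v] by simp
  qed simp
  finally show ?thesis
    by (simp add: normv1_def sum_distrib_right)
qed

lemma ball_step_game:
  assumes "0 < \<eta>"
    and x: "is_arg_min (\<lambda>v. (1 / \<eta>) * dotv d (\<lambda>j. - matTvec n d A q j) v
      + 1/2 * (normv d (\<lambda>j. v j - y j))\<^sup>2) (\<lambda>v. v \<in> unit_ball d) x"
    and z: "z \<in> unit_ball d"
  shows "game n d A z q - game n d A x q + \<eta> / 2 * (normv d (\<lambda>j. x j - y j))\<^sup>2
    + \<eta> / 2 * (normv d (\<lambda>j. z j - x j))\<^sup>2 \<le> \<eta> / 2 * (normv d (\<lambda>j. z j - y j))\<^sup>2"
proof -
  have "\<eta> * (- game n d A x q / \<eta> + 1/2 * (normv d (\<lambda>j. x j - y j))\<^sup>2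
      + 1/2 * (normv d (\<lambda>j. z j - x j))\<^sup>2)
    \<le> \<eta> * (- game n d A z q / \<eta> + 1/2 * (normv d (\<lambda>j. z j - y j))\<^sup>2)"
    using ball_step_three_point[OF x z] assms(1)
    by (intro mult_left_mono) (auto simp: dotv_uminus_matTvec_eq_game)
  then show ?thesis
    using assms(1) by (simp add: algebra_simps)
qed

lemma mult_le_scaled_squares:
  fixes a b \<eta> :: real
  assumes "0 < \<eta>"
  shows "a * b \<le> \<eta> / 2 * b\<^sup>2 + a\<^sup>2 / (2 * \<eta>)"
proof -
  have "2 * a * (\<eta> * b) \<le> a\<^sup>2 + (\<eta> * b)\<^sup>2"
    by (rule sum_squares_bound)
  then show ?thesis
    using assms by (simp add: field_simps power2_eq_square)
qed

locale optimistic_play =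
  fixes n d :: nat and A :: "nat \<Rightarrow> nat \<Rightarrow> real" and \<eta> :: real and T :: nat
    and w p wh ph :: "nat \<Rightarrow> nat \<Rightarrow> real"
  assumes n_pos: "0 < n"
    and eta_pos: "0 < \<eta>"
    and rows: "\<forall>i<n. normv d (\<lambda>j. if j < d then A i j else 0) \<le> 1"
    and wh_0: "wh 0 = (\<lambda>j. 0)"
    and ph_0: "ph 0 = (\<lambda>i. if i < n then 1 / real n else 0)"
    and w_step: "\<And>t. t \<in> {1..T} \<Longrightarrow>
      is_arg_min (\<lambda>v. (1 / \<eta>) * dotv d (\<lambda>j. - matTvec n d A (ph (t - 1)) j) v
        + 1/2 * (normv d (\<lambda>j. v j - wh (t - 1) j))\<^sup>2) (\<lambda>v. v \<in> unit_ball d) (w t)"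
    and p_step: "\<And>t. t \<in> {1..T} \<Longrightarrow>
      is_arg_min (\<lambda>q. \<eta> * dotv n (matvec n d A (wh (t - 1))) q + KL n q (ph (t - 1)))
        (\<lambda>q. q \<in> simplex n) (p t)"
    and wh_step: "\<And>t. t \<in> {1..T} \<Longrightarrow>
      is_arg_min (\<lambda>v. (1 / \<eta>) * dotv d (\<lambda>j. - matTvec n d A (p t) j) v
        + 1/2 * (normv d (\<lambda>j. v j - wh (t - 1) j))\<^sup>2) (\<lambda>v. v \<in> unit_ball d) (wh t)"
    and ph_step: "\<And>t. t \<in> {1..T} \<Longrightarrow>
      is_arg_min (\<lambda>q. \<eta> * dotv n (matvec n d A (w t)) q + KL n q (ph (t - 1)))
        (\<lambda>q. q \<in> simplex n) (ph t)"
begin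

lemma row_norms: "\<forall>i<n. normv d (A i) \<le> 1"
proof -
  have "normv d (\<lambda>j. if j < d then A i j else 0) = normv d (A i)" for i
    unfolding normv_def by (intro arg_cong[where f = sqrt] sum.cong) auto
  then show ?thesis
    using rows by simp
qed

lemma ph_simplex: "t \<le> T \<Longrightarrow> ph t \<in> simplex n \<and> (\<forall>i<n. 0 < ph t i)"
proof (induction t)
  case 0
  have "(\<Sum>i<n. ph 0 i) = (\<Sum>i<n. 1 / real n)"
    by (intro sum.cong) (auto simp: ph_0)
  then show ?case
    using n_pos by (simp add: ph_0 simplex_def)
next
  case (Suc t)
  then have "ph (Suc t) = exp_weights n \<eta> (matvec n d A (w (Suc t))) (ph t)"
    using ph_step[of "Suc t"] by (intro entropic_step_eq_exp_weights) auto
  then show ?case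
    using Suc exp_weights_simplex by simp
qed

lemma p_simplex: "t \<in> {1..T} \<Longrightarrow> p t \<in> simplex n \<and> (\<forall>i<n. 0 < p t i)"
  using entropic_step_eq_exp_weights[OF _ _ p_step] exp_weights_simplex ph_simplex[of "t - 1"]
  by auto

definition w_error :: "nat \<Rightarrow> real" where
  "w_error t = normv1 n (\<lambda>i. p t i - ph (t - 1) i) * normv d (\<lambda>j. w t j - wh t j)
     - \<eta> / 2 * ((normv d (\<lambda>j. w t j - wh t j))\<^sup>2 + (normv d (\<lambda>j. w t j - wh (t - 1) j))\<^sup>2)"

definition p_error :: "nat \<Rightarrow> real" where
  "p_error t = normv1 n (\<lambda>i. p t i - ph t i) * normv d (\<lambda>j. w t j - wh (t - 1) j)
     - ((normv1 n (\<lambda>i. p t i - ph (t - 1) i))\<^sup>2 + (normv1 n (\<lambda>i. p t i - ph t i))\<^sup>2) / (2 * \<eta>)"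

lemma errors_cancel: "w_error t + p_error t \<le> 0"
  using mult_le_scaled_squares[OF eta_pos, of "normv1 n (\<lambda>i. p t i - ph (t - 1) i)"
      "normv d (\<lambda>j. w t j - wh t j)"]
    mult_le_scaled_squares[OF eta_pos, of "normv1 n (\<lambda>i. p t i - ph t i)"
      "normv d (\<lambda>j. w t j - wh (t - 1) j)"]
  unfolding w_error_def p_error_def add_divide_distrib distrib_left by linarith

lemma w_regret_step:
  assumes t: "t \<in> {1..T}" and u: "u \<in> unit_ball d"
  shows "game n d A u (p t) - game n d A (w t) (p t)
    \<le> \<eta> / 2 * (normv d (\<lambda>j. u j - wh (t - 1) j))\<^sup>2 - \<eta> / 2 * (normv d (\<lambda>j. u j - wh t j))\<^sup>2
      + w_error t"
proof -
  have "wh t \<in> unit_ball d"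
    using wh_step[OF t] by (simp add: is_arg_min_def)
  note w_prox = ball_step_game[OF eta_pos w_step[OF t] this]
  note wh_prox = ball_step_game[OF eta_pos wh_step[OF t] u]
  have "\<bar>game n d A (\<lambda>j. w t j - wh t j) (\<lambda>i. p t i - ph (t - 1) i)\<bar>
      \<le> normv1 n (\<lambda>i. p t i - ph (t - 1) i) * normv d (\<lambda>j. w t j - wh t j)"
    by (rule abs_game_le[OF row_norms])
  then have "game n d A (wh t) (p t) - game n d A (w t) (p t)
      - game n d A (wh t) (ph (t - 1)) + game n d A (w t) (ph (t - 1))
    \<le> normv1 n (\<lambda>i. p t i - ph (t - 1) i) * normv d (\<lambda>j. w t j - wh t j)"
    unfolding game_diff_diff[symmetric] by linarith
  then show ?thesis
    using w_prox wh_prox unfolding normv_diff_commute[of d "wh t" "w t"] w_error_def distrib_left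
    by linarith
qed

lemma p_regret_step_identity:
  assumes t: "t \<in> {1..T}" and u: "u \<in> simplex n"
  shows "\<eta> * game n d A (w t) (p t) - \<eta> * game n d A (w t) u
    = KL n u (ph (t - 1)) - KL n u (ph t) - KL n (p t) (ph (t - 1)) - KL n (ph t) (p t)
      + \<eta> * game n d A (\<lambda>j. w t j - wh (t - 1) j) (\<lambda>i. p t i - ph t i)"
proof -
  have prev: "ph (t - 1) \<in> simplex n" "\<forall>i<n. 0 < ph (t - 1) i" and "ph t \<in> simplex n"
    using ph_simplex[of "t - 1"] ph_simplex[of t] t by auto
  have "\<eta> * game n d A (wh (t - 1)) (p t) + KL n (p t) (ph (t - 1)) + KL n (ph t) (p t)
      = \<eta> * game n d A (wh (t - 1)) (ph t) + KL n (ph t) (ph (t - 1))"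
    using entropic_step_three_point[OF prev p_step[OF t] \<open>ph t \<in> simplex n\<close>]
    by (simp add: dotv_matvec_eq_game)
  moreover have "\<eta> * game n d A (w t) (ph t) + KL n (ph t) (ph (t - 1)) + KL n u (ph t)
      = \<eta> * game n d A (w t) u + KL n u (ph (t - 1))"
    using entropic_step_three_point[OF prev ph_step[OF t] u]
    by (simp add: dotv_matvec_eq_game)
  ultimately show ?thesis
    unfolding game_diff_diff[symmetric] right_diff_distrib distrib_left by linarith
qed

lemma p_regret_step:
  assumes t: "t \<in> {1..T}" and u: "u \<in> simplex n"
  shows "game n d A (w t) (p t) - game n d A (w t) u
    \<le> KL n u (ph (t - 1)) / \<eta> - KL n u (ph t) / \<eta> + p_error t"
proof -
  have prev: "ph (t - 1) \<in> simplex n" "\<forall>i<n. 0 < ph (t - 1) i"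
    and cur: "ph t \<in> simplex n"
    and p: "p t \<in> simplex n" "\<forall>i<n. 0 < p t i"
    using ph_simplex[of "t - 1"] ph_simplex[of t] p_simplex[OF t] t by auto
  have "\<bar>game n d A (\<lambda>j. w t j - wh (t - 1) j) (\<lambda>i. p t i - ph t i)\<bar>
      \<le> normv1 n (\<lambda>i. p t i - ph t i) * normv d (\<lambda>j. w t j - wh (t - 1) j)"
    by (rule abs_game_le[OF row_norms])
  then have "\<eta> * game n d A (\<lambda>j. w t j - wh (t - 1) j) (\<lambda>i. p t i - ph t i)
      \<le> \<eta> * (normv1 n (\<lambda>i. p t i - ph t i) * normv d (\<lambda>j. w t j - wh (t - 1) j))"
    using eta_pos by (intro mult_left_mono) (auto dest: abs_le_D1)
  moreover have "(normv1 n (\<lambda>i. p t i - ph (t - 1) i))\<^sup>2 \<le> 2 * KL n (p t) (ph (t - 1))"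
    using p prev by (intro pinsker)
  moreover have "(normv1 n (\<lambda>i. p t i - ph t i))\<^sup>2 \<le> 2 * KL n (ph t) (p t)"
    using pinsker[OF cur p] normv1_diff_commute[of n "ph t" "p t"] by simp
  ultimately have "\<eta> * (game n d A (w t) (p t) - game n d A (w t) u)
      \<le> KL n u (ph (t - 1)) - KL n u (ph t)
        + \<eta> * (normv1 n (\<lambda>i. p t i - ph t i) * normv d (\<lambda>j. w t j - wh (t - 1) j))
        - (normv1 n (\<lambda>i. p t i - ph (t - 1) i))\<^sup>2 / 2 - (normv1 n (\<lambda>i. p t i - ph t i))\<^sup>2 / 2"
    using p_regret_step_identity[OF t u] unfolding right_diff_distrib by linarith
  also have "\<dots> = \<eta> * (KL n u (ph (t - 1)) / \<eta> - KL n u (ph t) / \<eta> + p_error t)"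
    using eta_pos by (simp add: p_error_def field_simps)
  finally show ?thesis
    using eta_pos by simp
qed

lemma w_regret_le:
  assumes u: "u \<in> unit_ball d"
  shows "(\<Sum>t=1..T. game n d A u (p t) - game n d A (w t) (p t)) \<le> \<eta> / 2 + (\<Sum>t=1..T. w_error t)"
proof -
  define D where "D t = \<eta> / 2 * (normv d (\<lambda>j. u j - wh t j))\<^sup>2" for t
  have "(\<Sum>t=1..T. game n d A u (p t) - game n d A (w t) (p t))
      \<le> (\<Sum>t=1..T. (D (t - 1) - D t) + w_error t)"
    using w_regret_step u by (intro sum_mono) (simp add: D_def)
  also have "\<dots> = D 0 - D T + (\<Sum>t=1..T. w_error t)"
    using sum_telescope''[of 0 T D] by (simp add: sum.distrib sum_subtractf)
  also have "D 0 \<le> \<eta> / 2"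
    using u eta_pos by (simp add: D_def wh_0 unit_ball_def normv_def sum_nonneg mult_left_le)
  moreover have "0 \<le> D T"
    using eta_pos by (simp add: D_def)
  ultimately show ?thesis
    by linarith
qed

lemma p_regret_le:
  assumes u: "u \<in> simplex n"
  shows "(\<Sum>t=1..T. game n d A (w t) (p t) - game n d A (w t) u)
    \<le> ln (real n) / \<eta> + (\<Sum>t=1..T. p_error t)"
proof -
  define D where "D t = KL n u (ph t) / \<eta>" for t
  have "(\<Sum>t=1..T. game n d A (w t) (p t) - game n d A (w t) u)
      \<le> (\<Sum>t=1..T. (D (t - 1) - D t) + p_error t)"
    using p_regret_step u by (intro sum_mono) (simp add: D_def)
  also have "\<dots> = D 0 - D T + (\<Sum>t=1..T. p_error t)"
    using sum_telescope''[of 0 T D] by (simp add: sum.distrib sum_subtractf)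
  also have "D 0 \<le> ln (real n) / \<eta>"
    unfolding D_def ph_0 using u eta_pos by (intro divide_right_mono KL_uniform_le_ln) auto
  moreover have "0 \<le> D T"
    unfolding D_def using u ph_simplex[of T] eta_pos by (simp add: KL_nonneg)
  ultimately show ?thesis
    by linarith
qed

lemma regret_le:
  "((\<Sum>t=1..T. game n d A (w t) (p t))
      - Inf ((\<lambda>q. \<Sum>t=1..T. game n d A (w t) q) ` simplex n))
    + ((\<Sum>t=1..T. - game n d A (w t) (p t))
      - Inf ((\<lambda>v. \<Sum>t=1..T. - game n d A v (p t)) ` unit_ball d))
    \<le> \<eta> / 2 + ln (real n) / \<eta>"
proof -
  have "(\<Sum>t=1..T. game n d A (w t) (p t)) - ln (real n) / \<eta> - (\<Sum>t=1..T. p_error t)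
      \<le> Inf ((\<lambda>q. \<Sum>t=1..T. game n d A (w t) q) ` simplex n)"
  proof (rule cINF_greatest)
    show "simplex n \<noteq> {}"
      using ph_simplex[of 0] by blast
    show "(\<Sum>t=1..T. game n d A (w t) (p t)) - ln (real n) / \<eta> - (\<Sum>t=1..T. p_error t)
        \<le> (\<Sum>t=1..T. game n d A (w t) u)" if "u \<in> simplex n" for u
      using p_regret_le[OF that] by (simp add: sum_subtractf)
  qed
  moreover have "- (\<Sum>t=1..T. game n d A (w t) (p t)) - \<eta> / 2 - (\<Sum>t=1..T. w_error t)
      \<le> Inf ((\<lambda>v. \<Sum>t=1..T. - game n d A v (p t)) ` unit_ball d)"
  proof (rule cINF_greatest)
    show "unit_ball d \<noteq> {}"
      by (auto simp: unit_ball_def normv_def intro!: exI[of _ "\<lambda>j. 0"])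
    show "- (\<Sum>t=1..T. game n d A (w t) (p t)) - \<eta> / 2 - (\<Sum>t=1..T. w_error t)
        \<le> (\<Sum>t=1..T. - game n d A u (p t))" if "u \<in> unit_ball d" for u
      using w_regret_le[OF that] by (simp add: sum_subtractf sum_negf)
  qed
  moreover have "(\<Sum>t=1..T. w_error t) + (\<Sum>t=1..T. p_error t) \<le> 0"
    unfolding sum.distrib[symmetric] by (intro sum_nonpos errors_cancel)
  ultimately show ?thesis
    by (simp add: sum_negf)
qed

end

theorem proposition3:
  "\<exists>C::real. \<forall>(n::nat) (d::nat) (A::nat \<Rightarrow> nat \<Rightarrow> real) (T::nat)
      (w::nat \<Rightarrow> nat \<Rightarrow> real) (p::nat \<Rightarrow> nat \<Rightarrow> real)
      (wh::nat \<Rightarrow> nat \<Rightarrow> real) (ph::nat \<Rightarrow> nat \<Rightarrow> real).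
     n \<ge> 2
     \<and> (\<forall>i<n. normv d (\<lambda>j. if j < d then A i j else 0) \<le> 1)
     \<and> wh 0 = (\<lambda>j. 0)
     \<and> ph 0 = (\<lambda>i. if i < n then 1 / real n else 0)
     \<and> (\<forall>t\<in>{1..T}.
          is_arg_min (\<lambda>v. (1 / sqrt (ln (real n))) * dotv d (\<lambda>j. - matTvec n d A (ph (t - 1)) j) v
                          + 1/2 * (normv d (\<lambda>j. v j - wh (t - 1) j))\<^sup>2)
                     (\<lambda>v. v \<in> unit_ball d) (w t)
        \<and> is_arg_min (\<lambda>q. sqrt (ln (real n)) * dotv n (matvec n d A (wh (t - 1))) q
                          + KL n q (ph (t - 1)))
                     (\<lambda>q. q \<in> simplex n) (p t)
        \<and> is_arg_min (\<lambda>v. (1 / sqrt (ln (real n))) * dotv d (\<lambda>j. - matTvec n d A (p t) j) v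
                          + 1/2 * (normv d (\<lambda>j. v j - wh (t - 1) j))\<^sup>2)
                     (\<lambda>v. v \<in> unit_ball d) (wh t)
        \<and> is_arg_min (\<lambda>q. sqrt (ln (real n)) * dotv n (matvec n d A (w t)) q
                          + KL n q (ph (t - 1)))
                     (\<lambda>q. q \<in> simplex n) (ph t))
     \<longrightarrow>
       ((\<Sum>t=1..T. game n d A (w t) (p t))
          - Inf ((\<lambda>q. \<Sum>t=1..T. game n d A (w t) q) ` simplex n))
     + ((\<Sum>t=1..T. - game n d A (w t) (p t))
          - Inf ((\<lambda>v. \<Sum>t=1..T. - game n d A v (p t)) ` unit_ball d))
       \<le> C * sqrt (ln (real n))"
proof (intro exI[of _ "3 / 2"] allI impI, goal_cases)
  case (1 n d A T w p wh ph)
  let ?\<eta> = "sqrt (ln (real n))"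
  have "0 < ln (real n)"
    using 1 by simp
  then have "0 < ?\<eta>"
    by simp
  interpret optimistic_play n d A ?\<eta> T w p wh ph
    using 1 \<open>0 < ?\<eta>\<close> by unfold_locales auto
  have "?\<eta> / 2 + ln (real n) / ?\<eta> = 3 / 2 * ?\<eta>"
    using \<open>0 < ln (real n)\<close> by (simp add: real_div_sqrt)
  then show ?case
    using regret_le by simp
qed

end
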